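(* For any two distinct elements $\bar c,\bar a$ of $\mathcal C$, the line segment $\bar c\bar a$ meets $\operatorname{conv}(\frac12(d+\mathcal W))$.
   Context: Setting: $G$ compact Lie group, $K\subset G$ closed, $G/K$ connected almost effective, isotropy representation $\mathfrak p=\mathfrak p_1\oplus\cdots\oplus\mathfrak p_r$ ($r\ge2$) with pairwise inequivalent $\mathbb R$-irreducible summands, $d_i=\dim\mathfrak p_i$, $d=(d_1,\dots,d_r)$, $n=\sum d_i$. The scalar curvature of the metric $e^{q_i}Q$ on $\mathfrak p_i$ is $S(q)=\sum_{w\in\mathcal W}A_we^{w\cdot q}$, $\mathcal W\subset\mathbb Z^r$ finite, $A_w\ne0$, each $w$ of type I (one entry $-1$), type II (one entry $1$, two entries $-1$) or type III (one entry $1$, one entry $-2$), other entries $0$; $A_w>0$ for type I and $<0$ otherwise. Assume $\dim\operatorname{conv}(\mathcal W)=r-1$. $J$ is the symmetric bilinear form with $J(p,p)=\frac1{n-1}(\sum p_i)^2-\sum p_i^2/d_i$. $u=\sum_{\bar c\in\mathcal C}F_{\bar c}e^{\bar c\cdot q}$ ($\mathcal C$ finite, $F_{\bar c}\ne0$) is a superpotential: for every $\xi$, $\sum_{(\bar a,\bar c)\in\mathcal C^2,\ \bar a+\bar c=\xi}J(\bar a,\bar c)F_{\bar a}F_{\bar c}$ equals $A_w$ if $\xi=d+w$, $w\in\mathcal W$, and $0$ otherwise; $\mathcal C$ is normalised to lie in $\{\sum\bar x_i=\frac12(n-1)\}$. *)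

theory Defs
  imports "HOL-Analysis.Analysis"
begin

text \<open>Vectors in R^r are modelled as real^'r with CARD('r) = r.
  The dimensions d_i are given as d :: nat^'r.\<close>

definition dvec :: "nat^'r \<Rightarrow> real^'r" where
  "dvec d = (\<chi> i. real (d $ i))"

definition ndim :: "nat^'r::finite \<Rightarrow> nat" where
  "ndim d = (\<Sum>i\<in>UNIV. d $ i)"

definition typeI :: "real^'r \<Rightarrow> bool" where
  "typeI w \<longleftrightarrow> (\<exists>i. w $ i = -1 \<and> (\<forall>j. j \<noteq> i \<longrightarrow> w $ j = 0))"

definition typeII :: "real^'r \<Rightarrow> bool" where
  "typeII w \<longleftrightarrow> (\<exists>i j k. i \<noteq> j \<and> i \<noteq> k \<and> j \<noteq> k \<and>
      w $ i = 1 \<and> w $ j = -1 \<and> w $ k = -1 \<and> (\<forall>l. l \<notin> {i, j, k} \<longrightarrow> w $ l = 0))"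

definition typeIII :: "real^'r \<Rightarrow> bool" where
  "typeIII w \<longleftrightarrow> (\<exists>i j. i \<noteq> j \<and> w $ i = 1 \<and> w $ j = -2 \<and>
      (\<forall>l. l \<notin> {i, j} \<longrightarrow> w $ l = 0))"

definition Jform :: "nat^'r::finite \<Rightarrow> real^'r \<Rightarrow> real^'r \<Rightarrow> real" where
  "Jform d p q = (\<Sum>i\<in>UNIV. p $ i) * (\<Sum>i\<in>UNIV. q $ i) / (real (ndim d) - 1)
      - (\<Sum>i\<in>UNIV. p $ i * q $ i / real (d $ i))"

definition scal_data :: "nat^'r::finite \<Rightarrow> (real^'r) set \<Rightarrow> (real^'r \<Rightarrow> real) \<Rightarrow> bool" where
  "scal_data d W A \<longleftrightarrow>
     CARD('r) \<ge> 2 \<and> (\<forall>i. d $ i \<ge> 1) \<and> finite W \<and>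
     (\<forall>w\<in>W. A w \<noteq> 0) \<and>
     (\<forall>w\<in>W. typeI w \<or> typeII w \<or> typeIII w) \<and>
     (\<forall>w\<in>W. typeI w \<longrightarrow> A w > 0) \<and>
     (\<forall>w\<in>W. \<not> typeI w \<longrightarrow> A w < 0) \<and>
     aff_dim (convex hull W) = int CARD('r) - 1"

text \<open>u = sum over C of F_c e^(c.q) is a (normalised) superpotential.\<close>
definition superpotential ::
  "nat^'r::finite \<Rightarrow> (real^'r) set \<Rightarrow> (real^'r \<Rightarrow> real) \<Rightarrow> (real^'r) set \<Rightarrow> (real^'r \<Rightarrow> real) \<Rightarrow> bool" where
  "superpotential d W A C F \<longleftrightarrow>
     finite C \<and> (\<forall>c\<in>C. F c \<noteq> 0) \<and>
     (\<forall>c\<in>C. (\<Sum>i\<in>UNIV. c $ i) = (real (ndim d) - 1) / 2) \<and>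
     (\<forall>\<xi>. (\<Sum>p\<in>{p \<in> C \<times> C. fst p + snd p = \<xi>}. Jform d (fst p) (snd p) * F (fst p) * F (snd p))
           = (if \<xi> \<in> (\<lambda>w. dvec d + w) ` W then A (\<xi> - dvec d) else 0))"

end

theory Submission
  imports Defs
begin

text \<open>If the segment from \<open>c\<close> to \<open>a\<close> missed \<open>H = conv((d + W)/2)\<close>, a strictly separating
  functional could be perturbed to a functional \<open>v\<close> that is injective on \<open>C\<close>. Let \<open>x\<^sub>1, x\<^sub>2\<close>
  be its two largest points on \<open>C\<close>; as one of \<open>c, a\<close> differs from \<open>x\<^sub>1\<close>, \<open>v\<close> is larger at
  \<open>x\<^sub>2\<close> than on \<open>H\<close>, so the superpotential equation has right-hand side \<open>0\<close> at
  \<open>\<xi> = 2x\<^sub>1, x\<^sub>1 + x\<^sub>2, 2x\<^sub>2\<close>. Only very few pairs of \<open>C\<close> sum to these \<open>\<xi>\<close>, which forces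
  \<open>J(x\<^sub>1,x\<^sub>1) = J(x\<^sub>1,x\<^sub>2) = J(x\<^sub>2,x\<^sub>2) = 0\<close> and hence \<open>J(x\<^sub>1-x\<^sub>2, x\<^sub>1-x\<^sub>2) = 0\<close>. But \<open>J\<close> is
  negative definite on the hyperplane \<open>\<Sum> p\<^sub>i = 0\<close>, which contains \<open>x\<^sub>1 - x\<^sub>2\<close> because
  \<open>C\<close> is normalised.\<close>

lemma interior_Union_closed_empty_interior:
  fixes \<F> :: "'a::real_normed_vector set set"
  assumes "finite \<F>" "\<And>S. S \<in> \<F> \<Longrightarrow> closed S \<and> interior S = {}"
  shows "interior (\<Union>\<F>) = {}"
  using assms
proof (induction \<F> rule: finite_induct)
  case (insert S \<F>)
  then have "interior (S \<union> \<Union>\<F>) = interior (\<Union>\<F>)"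
    by (subst Un_commute) (intro interior_closed_Un_empty_interior, auto)
  with insert show ?case by simp
qed simp

lemma open_contains_inj_on_inner:
  fixes C :: "'a::euclidean_space set"
  assumes "open U" "U \<noteq> {}" "finite C"
  shows "\<exists>v\<in>U. inj_on (inner v) C"
proof -
  define D where "D = {y - z | y z. y \<in> C \<and> z \<in> C \<and> y \<noteq> z}"
  define Z where "Z = (\<Union>\<delta>\<in>D. {v. \<delta> \<bullet> v = 0})"
  have "D \<subseteq> (\<lambda>(y, z). y - z) ` (C \<times> C)"
    unfolding D_def by auto
  then have "finite D"
    using assms(3) by (meson finite_SigmaI finite_imageI finite_subset)
  moreover have "0 \<notin> D" unfolding D_def by auto
  ultimately have "interior Z = {}"
    unfolding Z_def
    by (intro interior_Union_closed_empty_interior) (auto simp: closed_hyperplane, metis empty_iff interior_hyperplane)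
  then have "\<not> U \<subseteq> Z"
    using assms(1,2) interior_maximal by blast
  then obtain v where "v \<in> U" "v \<notin> Z" by blast
  moreover have "inj_on (inner v) C"
  proof (rule inj_onI, rule ccontr)
    fix y z assume "y \<in> C" "z \<in> C" "v \<bullet> y = v \<bullet> z" "y \<noteq> z"
    then have "y - z \<in> D" "(y - z) \<bullet> v = 0"
      unfolding D_def by (auto simp: inner_commute inner_diff_right)
    with \<open>v \<notin> Z\<close> show False unfolding Z_def by auto
  qed
  ultimately show ?thesis by blast
qed

lemma Jform_sym: "Jform d p q = Jform d q p"
  unfolding Jform_def by (simp add: mult.commute)

lemma Jform_scaleR_right: "Jform d p (c *\<^sub>R q) = c * Jform d p q"
  unfolding Jform_def by (simp add: sum_distrib_left algebra_simps)

lemma Jform_diff_right: "Jform d p (q - r) = Jform d p q - Jform d p r"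
  unfolding Jform_def by (simp add: sum_subtractf algebra_simps diff_divide_distrib)

lemma Jform_diff_diff:
  "Jform d (p - q) (p - q) = Jform d p p - 2 * Jform d p q + Jform d q q"
  using Jform_sym[of d "p - q"] Jform_sym[of d q p]
  by (simp add: Jform_diff_right)

lemma Jform_neg_on_sum_zero:
  assumes "\<forall>i. d $ i \<ge> 1" "(\<Sum>i\<in>UNIV. \<delta> $ i) = 0" "\<delta> \<noteq> 0"
  shows "Jform d \<delta> \<delta> < 0"
proof -
  obtain i where "\<delta> $ i \<noteq> 0" using assms(3) by (auto simp: vec_eq_iff)
  have "0 < (\<Sum>j\<in>UNIV. \<delta> $ j * \<delta> $ j / real (d $ j))"
  proof (rule sum_pos2)
    show "0 < \<delta> $ i * \<delta> $ i / real (d $ i)"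
      using \<open>\<delta> $ i \<noteq> 0\<close> assms(1)[rule_format, of i]
      by (intro divide_pos_pos) (auto, metis not_real_square_gt_zero)
    show "0 \<le> \<delta> $ j * \<delta> $ j / real (d $ j)" for j by simp
  qed auto
  with assms(2) show ?thesis unfolding Jform_def by simp
qed

text \<open>The coefficient of \<open>e\<^sup>\<xi>\<^sup>\<cdot>\<^sup>q\<close> in \<open>J(\<nabla>u, \<nabla>u)\<close>, the left-hand side of the superpotential
  equation.\<close>

definition Jsq_coeff :: "nat^'r::finite \<Rightarrow> (real^'r) set \<Rightarrow> (real^'r \<Rightarrow> real) \<Rightarrow> real^'r \<Rightarrow> real"
  where "Jsq_coeff d C F \<xi> =
    (\<Sum>p\<in>{p \<in> C \<times> C. fst p + snd p = \<xi>}. Jform d (fst p) (snd p) * F (fst p) * F (snd p))"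

lemma superpotential_Jsq_coeff_outside:
  assumes "superpotential d W A C F" "\<xi> \<notin> (\<lambda>w. dvec d + w) ` W"
  shows "Jsq_coeff d C F \<xi> = 0"
  using assms unfolding superpotential_def Jsq_coeff_def by auto

locale top_two =
  fixes C :: "(real^'r::finite) set" and v x\<^sub>1 x\<^sub>2 :: "real^'r"
  assumes finite: "finite C" and inj: "inj_on (inner v) C"
    and mem: "x\<^sub>1 \<in> C" "x\<^sub>2 \<in> C" and distinct: "x\<^sub>1 \<noteq> x\<^sub>2"
    and max: "\<And>y. y \<in> C \<Longrightarrow> v \<bullet> y \<le> v \<bullet> x\<^sub>1"
    and second_max: "\<And>y. y \<in> C \<Longrightarrow> y \<noteq> x\<^sub>1 \<Longrightarrow> v \<bullet> y \<le> v \<bullet> x\<^sub>2"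
begin

lemma second_less_max: "v \<bullet> x\<^sub>2 < v \<bullet> x\<^sub>1"
  using max[OF mem(2)] inj mem distinct by (metis inj_on_def order_less_le)

lemma inner_eqD: "y \<in> C \<Longrightarrow> z \<in> C \<Longrightarrow> v \<bullet> y = v \<bullet> z \<Longrightarrow> y = z"
  using inj by (auto dest: inj_onD)

lemma pair_sum_max:
  assumes "y \<in> C" "z \<in> C" "y + z = 2 *\<^sub>R x\<^sub>1"
  shows "y = x\<^sub>1 \<and> z = x\<^sub>1"
proof -
  have "v \<bullet> y + v \<bullet> z = 2 * (v \<bullet> x\<^sub>1)"
    using assms(3) by (metis inner_add_right inner_scaleR_right)
  then have "v \<bullet> y = v \<bullet> x\<^sub>1" "v \<bullet> z = v \<bullet> x\<^sub>1"
    using max[OF assms(1)] max[OF assms(2)] by linarith+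
  then show ?thesis using inner_eqD assms(1,2) mem(1) by blast
qed

lemma pair_sum_max_second:
  assumes "y \<in> C" "z \<in> C" "y + z = x\<^sub>1 + x\<^sub>2"
  shows "(y, z) = (x\<^sub>1, x\<^sub>2) \<or> (y, z) = (x\<^sub>2, x\<^sub>1)"
proof -
  have "v \<bullet> y + v \<bullet> z = v \<bullet> x\<^sub>1 + v \<bullet> x\<^sub>2"
    using assms(3) by (metis inner_add_right)
  then have "y = x\<^sub>1 \<or> z = x\<^sub>1"
    using second_max[OF assms(1)] second_max[OF assms(2)] second_less_max by force
  then show ?thesis
    using assms(3) by (auto simp: add.commute)
qed

lemma pair_sum_second:
  assumes "y \<in> C" "z \<in> C" "y + z = 2 *\<^sub>R x\<^sub>2"
  shows "y = x\<^sub>1 \<or> z = x\<^sub>1 \<or> (y = x\<^sub>2 \<and> z = x\<^sub>2)"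
proof (rule disjCI)
  assume "\<not> (z = x\<^sub>1 \<or> y = x\<^sub>2 \<and> z = x\<^sub>2)"
  have "v \<bullet> y + v \<bullet> z = 2 * (v \<bullet> x\<^sub>2)"
    using assms(3) by (metis inner_add_right inner_scaleR_right)
  moreover have "v \<bullet> z \<le> v \<bullet> x\<^sub>2" using second_max assms(2) \<open>\<not> (z = x\<^sub>1 \<or> _)\<close> by blast
  ultimately have "y \<noteq> x\<^sub>1 \<Longrightarrow> v \<bullet> y = v \<bullet> x\<^sub>2 \<and> v \<bullet> z = v \<bullet> x\<^sub>2"
    using second_max[OF assms(1)] by linarith
  then show "y = x\<^sub>1"
    using inner_eqD assms(1,2) mem(2) \<open>\<not> (z = x\<^sub>1 \<or> _)\<close> by blast
qed

lemma finite_pairs_sum: "finite {p \<in> C \<times> C. fst p + snd p = \<xi>}"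
  using finite by (auto intro: rev_finite_subset[of "C \<times> C"])

lemma Jsq_coeff_max: "Jsq_coeff d C F (2 *\<^sub>R x\<^sub>1) = Jform d x\<^sub>1 x\<^sub>1 * F x\<^sub>1 * F x\<^sub>1"
proof -
  have "{p \<in> C \<times> C. fst p + snd p = 2 *\<^sub>R x\<^sub>1} = {(x\<^sub>1, x\<^sub>1)}"
    using pair_sum_max mem(1) by (auto simp: scaleR_2)
  then show ?thesis unfolding Jsq_coeff_def by simp
qed

lemma Jsq_coeff_max_second:
  "Jsq_coeff d C F (x\<^sub>1 + x\<^sub>2) = 2 * (Jform d x\<^sub>1 x\<^sub>2 * F x\<^sub>1 * F x\<^sub>2)"
proof -
  have "{p \<in> C \<times> C. fst p + snd p = x\<^sub>1 + x\<^sub>2} = {(x\<^sub>1, x\<^sub>2), (x\<^sub>2, x\<^sub>1)}"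
    using mem by (auto simp: add.commute dest: pair_sum_max_second)
  then show ?thesis
    unfolding Jsq_coeff_def using distinct Jform_sym[of d x\<^sub>2 x\<^sub>1] by simp
qed

text \<open>Besides \<open>(x\<^sub>2, x\<^sub>2)\<close>, only \<open>(x\<^sub>1, 2x\<^sub>2 - x\<^sub>1)\<close> and its reverse can sum to \<open>2x\<^sub>2\<close>;
  the hypothesis kills their contribution.\<close>

lemma Jsq_coeff_second:
  assumes "Jform d x\<^sub>1 (2 *\<^sub>R x\<^sub>2 - x\<^sub>1) = 0"
  shows "Jsq_coeff d C F (2 *\<^sub>R x\<^sub>2) = Jform d x\<^sub>2 x\<^sub>2 * F x\<^sub>2 * F x\<^sub>2"
proof -
  let ?f = "\<lambda>p. Jform d (fst p) (snd p) * F (fst p) * F (snd p)"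
  have "?f p = 0" if "p \<in> {p \<in> C \<times> C. fst p + snd p = 2 *\<^sub>R x\<^sub>2} - {(x\<^sub>2, x\<^sub>2)}" for p
  proof -
    obtain y z where p: "p = (y, z)" by (cases p)
    with that have yz: "y \<in> C" "z \<in> C" "y + z = 2 *\<^sub>R x\<^sub>2" "(y, z) \<noteq> (x\<^sub>2, x\<^sub>2)"
      by auto
    then have "(y, z) = (x\<^sub>1, 2 *\<^sub>R x\<^sub>2 - x\<^sub>1) \<or> (y, z) = (2 *\<^sub>R x\<^sub>2 - x\<^sub>1, x\<^sub>1)"
      using pair_sum_second[OF yz(1-3)] by (auto simp: algebra_simps)
    then show ?thesis
      using assms Jform_sym[of d x\<^sub>1] p(1) by auto
  qed
  then have "Jsq_coeff d C F (2 *\<^sub>R x\<^sub>2) = sum ?f {(x\<^sub>2, x\<^sub>2)}"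
    unfolding Jsq_coeff_def using mem(2)
    by (intro sum.mono_neutral_right finite_pairs_sum) (auto simp: scaleR_2)
  then show ?thesis by simp
qed

lemma superpotential_second_max_below_half_shift:
  assumes sp: "superpotential d W A C F" and d: "\<forall>i. d $ i \<ge> 1"
  shows "\<exists>w\<in>W. v \<bullet> x\<^sub>2 \<le> v \<bullet> ((1/2) *\<^sub>R (dvec d + w))"
proof (rule ccontr)
  assume "\<not> ?thesis"
  then have below: "v \<bullet> ((1/2) *\<^sub>R (dvec d + w)) < v \<bullet> x\<^sub>2" if "w \<in> W" for w
    using that by force
  have vanish: "Jsq_coeff d C F \<xi> = 0" if "2 * (v \<bullet> x\<^sub>2) \<le> v \<bullet> \<xi>" for \<xi>
  proof (rule superpotential_Jsq_coeff_outside[OF sp], rule notI)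
    assume "\<xi> \<in> (\<lambda>w. dvec d + w) ` W"
    then obtain w where "w \<in> W" "\<xi> = dvec d + w" by blast
    with below[of w] that show False by (simp add: inner_scaleR_right)
  qed
  have F: "F x\<^sub>1 \<noteq> 0" "F x\<^sub>2 \<noteq> 0"
    using sp mem unfolding superpotential_def by auto
  have J11: "Jform d x\<^sub>1 x\<^sub>1 = 0"
    using vanish[of "2 *\<^sub>R x\<^sub>1"] second_less_max F by (simp add: Jsq_coeff_max)
  have J12: "Jform d x\<^sub>1 x\<^sub>2 = 0"
    using vanish[of "x\<^sub>1 + x\<^sub>2"] second_less_max F by (simp add: Jsq_coeff_max_second inner_add_right)
  have "Jform d x\<^sub>1 (2 *\<^sub>R x\<^sub>2 - x\<^sub>1) = 0"
    by (simp add: Jform_diff_right Jform_scaleR_right J11 J12)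
  then have J22: "Jform d x\<^sub>2 x\<^sub>2 = 0"
    using vanish[of "2 *\<^sub>R x\<^sub>2"] F by (simp add: Jsq_coeff_second)
  have "(\<Sum>i\<in>UNIV. x\<^sub>1 $ i) = (\<Sum>i\<in>UNIV. x\<^sub>2 $ i)"
    using sp mem unfolding superpotential_def by metis
  then have "(\<Sum>i\<in>UNIV. (x\<^sub>1 - x\<^sub>2) $ i) = 0"
    by (simp add: sum_subtractf)
  then have "Jform d (x\<^sub>1 - x\<^sub>2) (x\<^sub>1 - x\<^sub>2) < 0"
    using Jform_neg_on_sum_zero[of d "x\<^sub>1 - x\<^sub>2"] d distinct by simp
  then show False
    by (simp add: Jform_diff_diff J11 J12 J22)
qed

end

lemma top_two_exists:
  assumes "finite C" "inj_on (inner v) C" "c \<in> C" "a \<in> C" "c \<noteq> a"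
  obtains x\<^sub>1 x\<^sub>2 where "top_two C v x\<^sub>1 x\<^sub>2"
proof -
  have max_exists: "\<exists>x\<in>S. \<forall>y\<in>S. v \<bullet> y \<le> v \<bullet> x" if "finite S" "S \<noteq> {}" for S
    using Max_in[of "inner v ` S"] Max_ge[of "inner v ` S"] that by fastforce
  obtain x\<^sub>1 where x\<^sub>1: "x\<^sub>1 \<in> C" "\<forall>y\<in>C. v \<bullet> y \<le> v \<bullet> x\<^sub>1"
    using max_exists[of C] assms(1,3) by blast
  obtain x\<^sub>2 where x\<^sub>2: "x\<^sub>2 \<in> C - {x\<^sub>1}" "\<forall>y\<in>C - {x\<^sub>1}. v \<bullet> y \<le> v \<bullet> x\<^sub>2"
    using max_exists[of "C - {x\<^sub>1}"] assms by blast
  have "top_two C v x\<^sub>1 x\<^sub>2"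
    using assms(1,2) x\<^sub>1 x\<^sub>2 by unfold_locales auto
  then show thesis by (rule that)
qed

theorem corollary3p4:
  fixes d :: "nat^'r::finite" and W C :: "(real^'r) set"
    and A F :: "real^'r \<Rightarrow> real"
  assumes "scal_data d W A"
    and "superpotential d W A C F"
    and "c \<in> C" and "a \<in> C" and "c \<noteq> a"
  shows "closed_segment c a \<inter> convex hull ((\<lambda>w. (1/2) *\<^sub>R (dvec d + w)) ` W) \<noteq> {}"
    (is "_ \<inter> convex hull ?H \<noteq> {}")
proof
  assume "closed_segment c a \<inter> convex hull ?H = {}"
  moreover have "finite ?H" "\<forall>i. d $ i \<ge> 1"
    using assms(1) unfolding scal_data_def by auto
  ultimately obtain v\<^sub>0 b where "\<forall>x\<in>convex hull ?H. v\<^sub>0 \<bullet> x < b" "\<forall>x\<in>closed_segment c a. b < v\<^sub>0 \<bullet> x"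
    using separating_hyperplane_closed_compact[of "convex hull ?H" "closed_segment c a"]
    by (auto simp: compact_imp_closed compact_convex_hull finite_imp_compact)
  then have sep: "\<forall>h\<in>?H. v\<^sub>0 \<bullet> h < v\<^sub>0 \<bullet> c \<and> v\<^sub>0 \<bullet> h < v\<^sub>0 \<bullet> a"
    by (smt (verit) ends_in_segment hull_inc)
  define U where "U = (\<Inter>h\<in>?H. {u. u \<bullet> h < u \<bullet> c} \<inter> {u. u \<bullet> h < u \<bullet> a})"
  have "open U"
    unfolding U_def using \<open>finite ?H\<close>
    by (intro open_INT open_Int ballI open_Collect_less) (auto intro: continuous_intros)
  moreover have "U \<noteq> {}" using sep unfolding U_def by blast
  ultimately obtain v where v: "v \<in> U" "inj_on (inner v) C"
    using open_contains_inj_on_inner assms(2) unfolding superpotential_def by blast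
  then obtain x\<^sub>1 x\<^sub>2 where "top_two C v x\<^sub>1 x\<^sub>2"
    using top_two_exists assms(2-5) unfolding superpotential_def by blast
  then interpret top_two C v x\<^sub>1 x\<^sub>2 .
  obtain w where "w \<in> W" "v \<bullet> x\<^sub>2 \<le> v \<bullet> ((1/2) *\<^sub>R (dvec d + w))"
    using superpotential_second_max_below_half_shift assms(2) \<open>\<forall>i. d $ i \<ge> 1\<close> by blast
  moreover have "v \<bullet> c \<le> v \<bullet> x\<^sub>2 \<or> v \<bullet> a \<le> v \<bullet> x\<^sub>2"
    using second_max assms(3-5) by metis
  ultimately show False
    using v(1) unfolding U_def by fastforce
qed

end
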